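(* Let $A$ be a commutative Noetherian ring and $I=\langle a_1,\dots,a_n\rangle\subset A$. Let $u\in A$ be such that its image in $A/I$ is a unit, and let $v\in A$ with $uv-1\in I$. Let $r$ be an even integer with $2\le r\le n$, let $B=A/\langle a_{r+1},\dots,a_n\rangle$, and write a bar for reduction modulo $\langle a_{r+1},\dots,a_n\rangle$. Assume the unimodular row $(\bar v,\bar a_2,-\bar a_1,\dots,\bar a_r,-\bar a_{r-1})$ can be completed to an invertible matrix over $B$. Then there exists $\alpha\in M_{n\times n}(A)$ such that (1) $\det(\alpha)-u\in I$, and (2) setting $(b_1,\dots,b_n)=(a_1,\dots,a_n)\alpha$, one has $I=\langle b_1,\dots,b_n\rangle$.
   Context: A row $(c_1,\dots,c_m)$ over $B$ is completable to an invertible matrix if it is the first row of a matrix in $\mathrm{GL}_m(B)$. *)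

theory Defs
  imports "HOL-Algebra.Ring_Divisibility" "Jordan_Normal_Form.Determinant"
begin

text \<open>The commutative ring structure of a type-class ring, viewed as a HOL-Algebra ring record,
  so that the library notions noetherian_ring and genideal can be applied.\<close>
definition class_ring :: "'a::comm_ring_1 ring" where
  "class_ring = \<lparr>carrier = UNIV, mult = (*), one = 1, zero = 0, add = (+)\<rparr>"

definition gen_ideal :: "'a::comm_ring_1 set \<Rightarrow> 'a set" where
  "gen_ideal S = genideal class_ring S"

text \<open>Square matrices over A (0-indexed, size m) whose images in A/J are inverse to each other:
  this says M is invertible over B = A/J (elements of B written via representatives in A).\<close>
definition invertible_mod :: "'a::comm_ring_1 set \<Rightarrow> nat \<Rightarrow> 'a mat \<Rightarrow> bool" where
  "invertible_mod J m M \<longleftrightarrow> M \<in> carrier_mat m m \<and>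
     (\<exists>N \<in> carrier_mat m m. \<forall>i<m. \<forall>j<m.
        (M * N) $$ (i,j) - (1\<^sub>m m) $$ (i,j) \<in> J \<and> (N * M) $$ (i,j) - (1\<^sub>m m) $$ (i,j) \<in> J)"

definition completable_mod :: "'a::comm_ring_1 set \<Rightarrow> nat \<Rightarrow> (nat \<Rightarrow> 'a) \<Rightarrow> bool" where
  "completable_mod J m c \<longleftrightarrow>
     (\<exists>M. invertible_mod J m M \<and> (\<forall>j<m. M $$ (0,j) - c j \<in> J))"

end

theory Submission
  imports Defs
begin

text \<open>
  Take M over A, invertible modulo J, whose first row is congruent to the given row modulo J,
  and f with f det M \<equiv> 1 mod J. The row (v, a_2, -a_1, ..., a_r, -a_{r-1}) is orthogonal to
  x = (0, a_1, ..., a_r), so y = M x has y_0 \<in> J. Let M' be M without its first row and column,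
  and let \<alpha> be the transpose of diag(f, 1, ..., 1) (M' \<oplus> 1_{n-r}). Then b_1 = f y_1,
  b_j = y_j for 2 \<le> j \<le> r and b_j = a_j for j > r. Hence J \<subseteq> \<langle>b\<rangle>, every y_k lies in
  \<langle>b\<rangle>, and inverting M modulo J puts x, hence I, into \<langle>b\<rangle>.
  Modulo I the first row of M is (v, 0, ..., 0), so det M \<equiv> v det M' and
  det \<alpha> = f det M' \<equiv> f u v det M' \<equiv> f u det M \<equiv> u.
\<close>

global_interpretation ring_module: Modules.module "(*) :: 'a::comm_ring_1 \<Rightarrow> 'a \<Rightarrow> 'a"
  by standard (simp_all add: algebra_simps)

declare ring_module.scale_scale [simp del] \<comment> \<open>a * (b * x) = a * b * x loops against mult.assoc\<close>

lemma cring_class_ring: "cring (class_ring :: 'a::comm_ring_1 ring)"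
  unfolding class_ring_def
proof (rule cringI)
  show "abelian_group \<lparr>carrier = UNIV, mult = (*), one = (1::'a), zero = 0, add = (+)\<rparr>"
    by (rule abelian_groupI) (auto intro: left_minus)
  show "Group.comm_monoid \<lparr>carrier = UNIV, mult = (*), one = (1::'a), zero = 0, add = (+)\<rparr>"
    by (rule comm_monoidI) (auto simp: mult.assoc mult.commute)
qed (auto simp: distrib_right)

lemma ideal_class_ring_iff_subspace:
  "ideal K (class_ring :: 'a::comm_ring_1 ring) \<longleftrightarrow> ring_module.subspace K"
proof
  assume "ideal K class_ring"
  then interpret ideal K "class_ring :: 'a ring" .
  have "0 \<in> K" "\<And>x y. x \<in> K \<Longrightarrow> y \<in> K \<Longrightarrow> x + y \<in> K" "\<And>c x. x \<in> K \<Longrightarrow> c * x \<in> K"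
    using additive_subgroup.zero_closed[OF is_additive_subgroup]
      additive_subgroup.a_closed[OF is_additive_subgroup] I_l_closed
    by (simp_all add: class_ring_def)
  then show "ring_module.subspace K"
    unfolding ring_module.subspace_def by blast
next
  assume K: "ring_module.subspace K"
  interpret cring "class_ring :: 'a ring" by (rule cring_class_ring)
  have "a_inv class_ring x = - x" for x :: 'a
    by (rule minus_equality) (simp_all add: class_ring_def)
  then show "ideal K class_ring"
    using ring_module.subspace_0[OF K] ring_module.subspace_add[OF K]
      ring_module.subspace_neg[OF K] ring_module.subspace_scale[OF K]
    by (intro idealI ring_axioms add.subgroupI) (auto simp: class_ring_def mult.commute)
qed

lemma gen_ideal_eq_span: "gen_ideal S = ring_module.span S"
  unfolding gen_ideal_def genideal_def ring_module.span_def hull_def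
  by (simp add: ideal_class_ring_iff_subspace)

lemma prod_diff_in_subspace:
  assumes K: "ring_module.subspace K" and fg: "\<And>i. i \<in> S \<Longrightarrow> f i - g i \<in> K"
  shows "prod f S - prod g S \<in> K"
  using fg
proof (induction S rule: infinite_finite_induct)
  case (insert i S)
  have "prod f (insert i S) - prod g (insert i S) = f i * (prod f S - prod g S) + prod g S * (f i - g i)"
    using insert.hyps by (simp add: algebra_simps)
  also have "\<dots> \<in> K"
    using insert by (intro ring_module.subspace_add[OF K] ring_module.subspace_scale[OF K]) auto
  finally show ?case .
qed (simp_all add: ring_module.subspace_0[OF K])

lemma det_diff_in_subspace:
  assumes K: "ring_module.subspace K" and A: "A \<in> carrier_mat m m" and B: "B \<in> carrier_mat m m"
    and AB: "\<And>i j. i < m \<Longrightarrow> j < m \<Longrightarrow> A $$ (i,j) - B $$ (i,j) \<in> K"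
  shows "det A - det B \<in> K"
proof -
  have "signof p * ((\<Prod>i = 0..<m. A $$ (i, p i)) - (\<Prod>i = 0..<m. B $$ (i, p i))) \<in> K"
    if "p permutes {0..<m}" for p
    using AB permutes_in_image[OF that]
    by (intro ring_module.subspace_scale[OF K] prod_diff_in_subspace[OF K]) auto
  then show ?thesis
    unfolding det_def'[OF A] det_def'[OF B] sum_subtractf[symmetric] right_diff_distrib
    by (intro ring_module.subspace_sum[OF K]) auto
qed

lemma invertible_mod_det_unit:
  assumes J: "ring_module.subspace J" and M: "invertible_mod J m M"
  shows "\<exists>f. det M * f - 1 \<in> J"
proof -
  obtain N where "M \<in> carrier_mat m m" "N \<in> carrier_mat m m"
    and "\<And>i j. i < m \<Longrightarrow> j < m \<Longrightarrow> (M * N) $$ (i,j) - 1\<^sub>m m $$ (i,j) \<in> J"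
    using M unfolding invertible_mod_def by blast
  then have "det (M * N) - det (1\<^sub>m m) \<in> J"
    by (intro det_diff_in_subspace[OF J]) auto
  then have "det M * det N - 1 \<in> J"
    using det_mult[OF \<open>M \<in> carrier_mat m m\<close> \<open>N \<in> carrier_mat m m\<close>] by simp
  then show ?thesis ..
qed

lemma det_first_row_cong:
  assumes K: "ring_module.subspace K" and M: "M \<in> carrier_mat (Suc k) (Suc k)"
    and M00: "M $$ (0,0) - v \<in> K" and M0j: "\<And>j. 0 < j \<Longrightarrow> j < Suc k \<Longrightarrow> M $$ (0,j) \<in> K"
  shows "det M - v * det (mat_delete M 0 0) \<in> K"
proof -
  have "det M = M $$ (0,0) * det (mat_delete M 0 0) + (\<Sum>j<k. M $$ (0, Suc j) * cofactor M 0 (Suc j))"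
    using laplace_expansion_row[OF M, of 0] unfolding sum.lessThan_Suc_shift
    by (simp add: cofactor_def[of M 0 0])
  then have "det M - v * det (mat_delete M 0 0)
      = (M $$ (0,0) - v) * det (mat_delete M 0 0) + (\<Sum>j<k. M $$ (0, Suc j) * cofactor M 0 (Suc j))"
    by (simp add: algebra_simps)
  also have "\<dots> \<in> K"
    using M00 M0j
    by (intro ring_module.subspace_add[OF K] ring_module.subspace_sum[OF K])
       (auto simp: mult.commute[of _ "cofactor M 0 _"] mult.commute[of _ "det _"]
             intro: ring_module.subspace_scale[OF K])
  finally show ?thesis .
qed

lemma det_four_block_one:
  assumes A: "A \<in> carrier_mat r r"
  shows "det (four_block_mat A (0\<^sub>m r t) (0\<^sub>m t r) (1\<^sub>m t)) = det A"
proof (induction t)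
  case 0
  have "four_block_mat A (0\<^sub>m r 0) (0\<^sub>m 0 r) (1\<^sub>m 0) = A"
    using A by (intro eq_matI) auto
  then show ?case by simp
next
  case (Suc t)
  let ?B = "four_block_mat A (0\<^sub>m r (Suc t)) (0\<^sub>m (Suc t) r) (1\<^sub>m (Suc t))"
  have B: "?B \<in> carrier_mat (Suc (r + t)) (Suc (r + t))"
    using four_block_carrier_mat[OF A one_carrier_mat[of "Suc t"]] by simp
  have delete: "mat_delete ?B (r + t) (r + t) = four_block_mat A (0\<^sub>m r t) (0\<^sub>m t r) (1\<^sub>m t)"
    by (rule eq_matI) (use A in \<open>auto simp: mat_delete_def\<close>)
  have "det ?B = (\<Sum>j<Suc (r + t). ?B $$ (r + t, j) * cofactor ?B (r + t) j)"
    by (rule laplace_expansion_row[OF B]) simp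
  also have "\<dots> = cofactor ?B (r + t) (r + t)"
    using A by (auto simp: sum.lessThan_Suc intro!: sum.neutral)
  also have "\<dots> = det (four_block_mat A (0\<^sub>m r t) (0\<^sub>m t r) (1\<^sub>m t))"
    by (simp add: cofactor_def delete neg_one_even_power)
  finally show ?case using Suc by simp
qed

lemma mult_mat_vec_in_subspace:
  assumes L: "ring_module.subspace L" and i: "i < dim_row A" and dim: "dim_col A = dim_vec x"
    and terms: "\<And>j. j < dim_vec x \<Longrightarrow> A $$ (i,j) * x $ j \<in> L"
  shows "(A *\<^sub>v x) $ i \<in> L"
  unfolding index_mult_mat_vec[OF i] scalar_prod_def
  using i dim terms by (intro ring_module.subspace_sum[OF L]) auto

lemma invertible_mod_cancel_mult_vec:
  assumes L: "ring_module.subspace L" and JL: "J \<subseteq> L" and M: "invertible_mod J m M"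
    and x: "x \<in> carrier_vec m" and Mx: "\<And>k. k < m \<Longrightarrow> (M *\<^sub>v x) $ k \<in> L" and i: "i < m"
  shows "x $ i \<in> L"
proof -
  obtain N where Mc: "M \<in> carrier_mat m m" and N: "N \<in> carrier_mat m m"
    and NM: "\<And>i j. i < m \<Longrightarrow> j < m \<Longrightarrow> (N * M) $$ (i,j) - 1\<^sub>m m $$ (i,j) \<in> J"
    using M unfolding invertible_mod_def by blast
  have "x $ i = (N *\<^sub>v (M *\<^sub>v x)) $ i - ((N * M - 1\<^sub>m m) *\<^sub>v x) $ i"
    using Mc N x i by (simp add: minus_mult_distrib_mat_vec[of _ m m])
  moreover have "(N *\<^sub>v (M *\<^sub>v x)) $ i \<in> L"
    using N Mc x i Mx
    by (intro mult_mat_vec_in_subspace[OF L]) (auto intro: ring_module.subspace_scale[OF L])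
  moreover have "((N * M - 1\<^sub>m m) *\<^sub>v x) $ i \<in> L"
  proof (rule mult_mat_vec_in_subspace[OF L])
    fix j assume "j < dim_vec x"
    then have "(N * M - 1\<^sub>m m) $$ (i,j) \<in> L"
      using NM[of i j] JL x i by (subst index_minus_mat(1)) auto
    then show "(N * M - 1\<^sub>m m) $$ (i,j) * x $ j \<in> L"
      by (metis mult.commute ring_module.subspace_scale[OF L])
  qed (use N Mc x i in auto)
  ultimately show ?thesis
    by (metis ring_module.subspace_diff[OF L])
qed


definition augmented_vec :: "nat \<Rightarrow> (nat \<Rightarrow> 'a::zero) \<Rightarrow> 'a vec" where
  "augmented_vec r a = vec (Suc r) (\<lambda>i. if i = 0 then 0 else a i)"

lemma augmented_vec_carrier [simp]: "augmented_vec r a \<in> carrier_vec (Suc r)"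
  by (simp add: augmented_vec_def)

lemma mult_augmented_vec:
  assumes M: "M \<in> carrier_mat m (Suc r)" and k: "k < m"
  shows "(M *\<^sub>v augmented_vec r a) $ k = (\<Sum>i\<in>{1..r}. M $$ (k,i) * a i)"
proof -
  have "{0..<Suc r} = insert 0 {1..r}" by auto
  then show ?thesis
    using M k by (simp add: augmented_vec_def scalar_prod_def)
qed

definition symplectic_row :: "'a::comm_ring_1 \<Rightarrow> (nat \<Rightarrow> 'a) \<Rightarrow> nat \<Rightarrow> 'a" where
  "symplectic_row v a = (\<lambda>k. if k = 0 then v else if odd k then a (k+1) else - a (k-1))"

lemma symplectic_row_in_span:
  assumes "even r" "0 < j" "j \<le> r"
  shows "symplectic_row v a j \<in> ring_module.span (a ` {1..r})"
proof (cases "odd j")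
  case True
  with assms have "j \<noteq> r" by auto
  with assms have "j + 1 \<in> {1..r}" by auto
  with True show ?thesis
    by (auto simp: symplectic_row_def intro: ring_module.span_base)
next
  case False
  with assms have "j - 1 \<in> {1..r}" by (auto elim!: evenE)
  then have "a (j - 1) \<in> ring_module.span (a ` {1..r})"
    by (intro ring_module.span_base) auto
  with False assms show ?thesis
    by (auto simp: symplectic_row_def intro: ring_module.span_neg)
qed

lemma symplectic_row_orthogonal:
  assumes "even r"
  shows "(\<Sum>i\<in>{1..r}. symplectic_row v a i * a i) = 0"
proof -
  obtain p where "r = 2 * p" using assms by blast
  moreover have "(\<Sum>i\<in>{1..2 * p}. symplectic_row v a i * a i) = 0"
    by (induction p) (simp_all add: symplectic_row_def algebra_simps)
  ultimately show ?thesis by simp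
qed

lemma first_row_symplectic_mult_augmented_vec:
  assumes J: "ring_module.subspace J" and r: "even r" and M: "M \<in> carrier_mat (Suc r) (Suc r)"
    and row: "\<And>j. j < Suc r \<Longrightarrow> M $$ (0,j) - symplectic_row v a j \<in> J"
  shows "(M *\<^sub>v augmented_vec r a) $ 0 \<in> J"
proof -
  have "(M *\<^sub>v augmented_vec r a) $ 0
      = (\<Sum>i\<in>{1..r}. (M $$ (0,i) - symplectic_row v a i) * a i)
        + (\<Sum>i\<in>{1..r}. symplectic_row v a i * a i)"
    using mult_augmented_vec[OF M, of 0] by (simp add: algebra_simps sum.distrib[symmetric])
  also have "\<dots> = (\<Sum>i\<in>{1..r}. (M $$ (0,i) - symplectic_row v a i) * a i)"
    using symplectic_row_orthogonal[OF r] by simp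
  also have "\<dots> \<in> J"
    using row by (intro ring_module.subspace_sum[OF J])
      (auto simp: mult.commute[of _ "a _"] intro: ring_module.subspace_scale[OF J])
  finally show ?thesis .
qed

lemma det_first_row_symplectic_cong:
  assumes I: "ring_module.subspace I" and JI: "J \<subseteq> I" and aI: "a ` {1..r} \<subseteq> I"
    and r: "even r" and M: "M \<in> carrier_mat (Suc r) (Suc r)"
    and row: "\<And>j. j < Suc r \<Longrightarrow> M $$ (0,j) - symplectic_row v a j \<in> J"
  shows "det M - v * det (mat_delete M 0 0) \<in> I"
proof (rule det_first_row_cong[OF I M])
  show "M $$ (0,0) - v \<in> I"
    using row[of 0] JI by (auto simp: symplectic_row_def)
next
  fix j assume j: "0 < j" "j < Suc r"
  have "symplectic_row v a j \<in> I"
    using symplectic_row_in_span[OF r, of j v a] j ring_module.span_minimal[OF aI I] by auto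
  moreover have "M $$ (0,j) - symplectic_row v a j \<in> I"
    using row[OF j(2)] JI by auto
  ultimately have "M $$ (0,j) - symplectic_row v a j + symplectic_row v a j \<in> I"
    by (intro ring_module.subspace_add[OF I])
  then show "M $$ (0,j) \<in> I" by simp
qed

definition completion_transform :: "nat \<Rightarrow> nat \<Rightarrow> 'a::comm_ring_1 \<Rightarrow> 'a mat \<Rightarrow> 'a mat" where
  "completion_transform n r f M = transpose_mat (multrow 0 f
     (four_block_mat (mat_delete M 0 0) (0\<^sub>m r (n - r)) (0\<^sub>m (n - r) r) (1\<^sub>m (n - r))))"

lemma completion_transform_carrier:
  assumes "M \<in> carrier_mat (Suc r) (Suc r)" "r \<le> n"
  shows "completion_transform n r f M \<in> carrier_mat n n"
proof -
  have "mat_delete M 0 0 \<in> carrier_mat r r"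
    using mat_delete_carrier[OF assms(1)] by simp
  from four_block_carrier_mat[OF this one_carrier_mat[of "n - r"]] assms(2)
  show ?thesis by (simp add: completion_transform_def)
qed

lemma det_completion_transform:
  assumes M: "M \<in> carrier_mat (Suc r) (Suc r)" and r: "0 < r" "r \<le> n"
  shows "det (completion_transform n r f M) = f * det (mat_delete M 0 0)"
proof -
  let ?B = "four_block_mat (mat_delete M 0 0) (0\<^sub>m r (n - r)) (0\<^sub>m (n - r) r) (1\<^sub>m (n - r))"
  have M': "mat_delete M 0 0 \<in> carrier_mat r r"
    using mat_delete_carrier[OF M] by simp
  have B: "?B \<in> carrier_mat n n"
    using four_block_carrier_mat[OF M' one_carrier_mat[of "n - r"]] r by simp
  have "det (completion_transform n r f M) = det (multrow 0 f ?B)"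
    unfolding completion_transform_def by (rule det_transpose[of _ n]) (simp add: B)
  also have "\<dots> = f * det ?B"
    using r by (intro det_multrow[OF _ B]) simp
  also have "det ?B = det (mat_delete M 0 0)"
    by (rule det_four_block_one[OF M'])
  finally show ?thesis .
qed

lemma det_completion_transform_cong:
  assumes I: "ring_module.subspace I" and M: "M \<in> carrier_mat (Suc r) (Suc r)"
    and r: "0 < r" "r \<le> n" and f: "det M * f - 1 \<in> I"
    and v: "det M - v * det (mat_delete M 0 0) \<in> I" and u: "u * v - 1 \<in> I"
  shows "det (completion_transform n r f M) - u \<in> I"
proof -
  let ?d = "det (mat_delete M 0 0)"
  have "det (completion_transform n r f M) - u
      = u * (det M * f - 1) - (u * f) * (det M - v * ?d) - (f * ?d) * (u * v - 1)"
    by (simp add: det_completion_transform[OF M r] algebra_simps)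
  also have "\<dots> \<in> I"
    using ring_module.subspace_scale[OF I f, of u] ring_module.subspace_scale[OF I v, of "u * f"]
      ring_module.subspace_scale[OF I u, of "f * ?d"]
    by (blast intro: ring_module.subspace_diff[OF I])
  finally show ?thesis .
qed

lemma index_completion_transform:
  assumes M: "M \<in> carrier_mat (Suc r) (Suc r)" and "r \<le> n" "i < n" "j < n"
  shows "completion_transform n r f M $$ (i,j)
       = (if j = 0 then f else 1) * (if i < r \<and> j < r then M $$ (Suc j, Suc i) else if i = j then 1 else 0)"
  using assms by (auto simp: completion_transform_def mat_delete_def)

lemma row_mult_completion_transform:
  assumes M: "M \<in> carrier_mat (Suc r) (Suc r)" and r: "0 < r" "r \<le> n" and j: "j \<in> {1..n}"
  shows "(\<Sum>i\<in>{1..n}. a i * completion_transform n r f M $$ (i - 1, j - 1))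
       = (if j \<le> r then (if j = 1 then f else 1) * (M *\<^sub>v augmented_vec r a) $ j else a j)"
proof (cases "j \<le> r")
  case True
  have "(\<Sum>i\<in>{1..n}. a i * completion_transform n r f M $$ (i - 1, j - 1))
      = (\<Sum>i\<in>{1..r}. (if j = 1 then f else 1) * (M $$ (j,i) * a i))"
    using r j True
    by (intro sum.mono_neutral_cong_right) (auto simp: index_completion_transform[OF M])
  with True show ?thesis
    by (simp add: sum_distrib_left mult_augmented_vec[OF M])
next
  case False
  have "(\<Sum>i\<in>{1..n}. a i * completion_transform n r f M $$ (i - 1, j - 1))
      = (\<Sum>i\<in>{1..n}. if i = j then a j else 0)"
    using r j False by (intro sum.cong) (auto simp: index_completion_transform[OF M])
  with False j show ?thesis
    by simp
qed

lemma span_completion_transform: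
  fixes a :: "nat \<Rightarrow> 'a::comm_ring_1"
  assumes r: "0 < r" "r \<le> n"
    and J: "J = ring_module.span (a ` {r+1..n})"
    and M: "invertible_mod J (Suc r) M" and f: "det M * f - 1 \<in> J"
    and row0: "(M *\<^sub>v augmented_vec r a) $ 0 \<in> J"
  shows "ring_module.span
           ((\<lambda>j. \<Sum>i\<in>{1..n}. a i * completion_transform n r f M $$ (i - 1, j - 1)) ` {1..n})
       = ring_module.span (a ` {1..n})"
    (is "ring_module.span (?b ` _) = _")
proof
  define K where "K = ring_module.span (?b ` {1..n})"
  have K: "ring_module.subspace K"
    unfolding K_def by simp
  have Mc: "M \<in> carrier_mat (Suc r) (Suc r)"
    using M by (simp add: invertible_mod_def)
  let ?y = "\<lambda>k. (M *\<^sub>v augmented_vec r a) $ k"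
  have bK: "(if j \<le> r then (if j = 1 then f else 1) * ?y j else a j) \<in> K" if j: "j \<in> {1..n}" for j
  proof -
    have "?b j \<in> K"
      unfolding K_def using j by (intro ring_module.span_base imageI)
    then show ?thesis
      unfolding row_mult_completion_transform[OF Mc r j] .
  qed
  have high: "a j \<in> K" if "j \<in> {r+1..n}" for j
    using bK[of j] that r by auto
  have JK: "J \<subseteq> K"
    unfolding J using high K by (intro ring_module.span_minimal) auto
  have yK: "?y k \<in> K" if k: "k < Suc r" for k
  proof -
    consider "k = 0" | "k = 1" | "2 \<le> k" by linarith
    then show ?thesis
    proof cases
      case 1
      with row0 JK show ?thesis by auto
    next
      case 2
      have "f * ?y k \<in> K"
        using bK[of 1] r 2 by simp
      then have "det M * (f * ?y k) \<in> K"
        by (rule ring_module.subspace_scale[OF K])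
      moreover have "?y k * (det M * f - 1) \<in> K"
        using f JK by (intro ring_module.subspace_scale[OF K]) blast
      ultimately have "det M * (f * ?y k) - ?y k * (det M * f - 1) \<in> K"
        by (rule ring_module.subspace_diff[OF K])
      then show ?thesis by (simp add: algebra_simps)
    next
      case 3
      with bK[of k] k r show ?thesis by simp
    qed
  qed
  have "a i \<in> K" if i: "i \<in> {1..n}" for i
  proof (cases "i \<le> r")
    case True
    have "augmented_vec r a $ i \<in> K"
      using True i by (intro invertible_mod_cancel_mult_vec[OF K JK M augmented_vec_carrier yK]) auto
    with True i show ?thesis by (simp add: augmented_vec_def)
  next
    case False
    with high i show ?thesis by simp
  qed
  then show "ring_module.span (a ` {1..n}) \<subseteq> K"
    using K by (intro ring_module.span_minimal) auto
next
  have terms: "a i * c \<in> ring_module.span (a ` {1..n})" if "i \<in> {1..n}" for i c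
    unfolding mult.commute[of "a i" c]
    using that by (intro ring_module.span_scale ring_module.span_base) simp
  show "ring_module.span (?b ` {1..n}) \<subseteq> ring_module.span (a ` {1..n})"
    using terms
    by (intro ring_module.span_minimal image_subsetI ring_module.span_sum ring_module.subspace_span) blast+
qed

theorem proposition7p4:
  fixes a :: "nat \<Rightarrow> 'A::comm_ring_1" and n r :: nat and u v :: 'A
  assumes noeth: "noetherian_ring (class_ring :: 'A ring)"
    and I_def: "I = gen_ideal (a ` {1..n})"
    and u_unit: "\<exists>w. u * w - 1 \<in> I"
    and uv: "u * v - 1 \<in> I"
    and r_even: "even r" and r_ge: "2 \<le> r" and r_le: "r \<le> n"
    and J_def: "J = gen_ideal (a ` {r+1..n})"
    and compl: "completable_mod J (r+1)
                  (\<lambda>k. if k = 0 then v else if odd k then a (k+1) else - a (k-1))"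
  shows "\<exists>\<alpha> \<in> carrier_mat n n. det \<alpha> - u \<in> I \<and>
           I = gen_ideal ((\<lambda>j. \<Sum>i\<in>{1..n}. a i * \<alpha> $$ (i-1, j-1)) ` {1..n})"
proof -
  have I: "I = ring_module.span (a ` {1..n})" and J: "J = ring_module.span (a ` {r+1..n})"
    using I_def J_def by (simp_all add: gen_ideal_eq_span)
  have JI: "J \<subseteq> I"
    unfolding I J by (intro ring_module.span_mono) auto
  obtain M where M: "invertible_mod J (Suc r) M"
    and row: "\<And>j. j < Suc r \<Longrightarrow> M $$ (0,j) - symplectic_row v a j \<in> J"
    using compl unfolding completable_mod_def symplectic_row_def by auto
  have Mc: "M \<in> carrier_mat (Suc r) (Suc r)"
    using M by (simp add: invertible_mod_def)
  obtain f where f: "det M * f - 1 \<in> J"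
    using invertible_mod_det_unit[OF _ M] J by auto
  have row0: "(M *\<^sub>v augmented_vec r a) $ 0 \<in> J"
    using J by (intro first_row_symplectic_mult_augmented_vec[OF _ r_even Mc row]) simp
  have "a ` {1..r} \<subseteq> I"
    unfolding I using r_le by (auto intro: ring_module.span_base)
  then have "det M - v * det (mat_delete M 0 0) \<in> I"
    using I by (intro det_first_row_symplectic_cong[OF _ JI _ r_even Mc row]) auto
  then have "det (completion_transform n r f M) - u \<in> I"
    using r_ge r_le f JI uv I by (intro det_completion_transform_cong[OF _ Mc]) auto
  moreover have "I = gen_ideal
      ((\<lambda>j. \<Sum>i\<in>{1..n}. a i * completion_transform n r f M $$ (i-1, j-1)) ` {1..n})"
    using span_completion_transform[OF _ r_le J M f row0] r_ge I by (simp add: gen_ideal_eq_span)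
  ultimately show ?thesis
    using completion_transform_carrier[OF Mc r_le] by blast
qed

end
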